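(* Let $\theta \geq 2$ be an integer, $F = 4\theta - 1$, and $p_j = \binom{F}{j} 2^{-F}$ for $j = 0,\ldots,F$. Then $$\sum_{j \leq \theta} (-j)\, p_j + \sum_{\theta < j \leq F} \big(j + 2(1 - j/F - \theta)\big) p_j > 0.$$
   Context: This quantity is the expected value $E\phi(e)$ of the weight $\phi(e) = -\zeta_0(e)$ if $\zeta_0(e) \leq \theta$ and $\phi(e) = \zeta_0(e) + 2(X - \theta)$ otherwise, where $\zeta_0(e) \sim \mathrm{Binomial}(F,1/2)$ and, given $\zeta_0(e)$, $X$ is Bernoulli$(1 - \zeta_0(e)/F)$. *)

theory Defs
  imports Complex_Main
begin

end

theory Submission
  imports Defs
begin

text \<open>
  Scaled by \<open>2^F\<close>, the sum is \<open>\<Sum>\<^sub>j w j \<cdot> (F choose j)\<close> plus a correction on \<open>j \<le> \<theta>\<close>,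
  where \<open>w j = j + 2(1 - j/F - \<theta>)\<close> is the weight used above \<open>\<theta>\<close>. Since \<open>E \<zeta>\<^sub>0 = F/2\<close> and
  \<open>F = 4\<theta> - 1\<close>, the full sum is \<open>2^(F-1)\<close>. The correction \<open>-j - w j\<close> is nonnegative for
  \<open>j < \<theta>\<close>, and at \<open>j = \<theta>\<close> it contributes \<open>-2 ((F-1) choose \<theta>)\<close>, which is smaller than
  \<open>2^(F-1)\<close> in absolute value because \<open>\<theta>\<close> is not a middle index of row \<open>F - 1\<close>.
\<close>

text \<open>\<open>tail_weight F \<theta> j\<close> is \<open>E (\<phi> | \<zeta>\<^sub>0 = j)\<close> for \<open>j > \<theta>\<close>, as \<open>E X = 1 - j/F\<close>.\<close>

definition tail_weight :: "nat \<Rightarrow> real \<Rightarrow> nat \<Rightarrow> real" where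
  "tail_weight n t j = real j + 2 * (1 - real j / real n - t)"

lemma two_choose_less_power:
  fixes n k :: nat
  assumes "0 < k" "k < n" "2 * k \<noteq> n"
  shows "2 * (n choose k) < 2 ^ n"
proof -
  have "(\<Sum>i\<in>{0, k, n - k}. n choose i) \<le> (\<Sum>i\<le>n. n choose i)"
    by (rule sum_mono2) (use assms in auto)
  also have "\<dots> = 2 ^ n" by (rule choose_row_sum)
  finally have "(\<Sum>i\<in>{0, k, n - k}. n choose i) \<le> 2 ^ n" .
  moreover have "(\<Sum>i\<in>{0, k, n - k}. n choose i) = 1 + (n choose k) + (n choose (n - k))"
    using assms by auto
  moreover have "n choose (n - k) = n choose k"
    using assms binomial_symmetric[of k n] by auto
  ultimately show ?thesis by linarith
qed

lemma sum_tail_weight_choose: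
  assumes "0 < n"
  shows "(\<Sum>j\<le>n. tail_weight n t j * real (n choose j)) = (real n + 2 - 4 * t) * 2 ^ (n - 1)"
proof -
  have "(\<Sum>j\<le>n. real (n choose j)) = 2 ^ n"
    unfolding of_nat_sum[symmetric] choose_row_sum by simp
  also have "(2::real) ^ n = 2 * 2 ^ (n - 1)"
    using assms by (simp add: power_eq_if)
  finally have row: "(\<Sum>j\<le>n. real (n choose j)) = 2 * 2 ^ (n - 1)" .
  have linear: "(\<Sum>j\<le>n. real j * real (n choose j)) = real n * 2 ^ (n - 1)"
    unfolding of_nat_mult[symmetric] of_nat_sum[symmetric] choose_linear_sum by simp
  have "(\<Sum>j\<le>n. tail_weight n t j * real (n choose j))
      = (1 - 2 / real n) * (\<Sum>j\<le>n. real j * real (n choose j)) + (2 - 2 * t) * (\<Sum>j\<le>n. real (n choose j))"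
    by (simp add: tail_weight_def sum_distrib_left sum.distrib[symmetric] algebra_simps)
  also have "\<dots> = (real n + 2 - 4 * t) * 2 ^ (n - 1)"
    unfolding row linear using assms by (simp add: field_simps)
  finally show ?thesis .
qed

lemma tail_weight_le_neg:
  assumes "real j + 1 \<le> t"
  shows "tail_weight n t j \<le> - real j"
proof -
  have "tail_weight n t j = real j + 2 - 2 * t - 2 * (real j / real n)"
    by (simp add: tail_weight_def algebra_simps)
  moreover have "0 \<le> real j / real n" by simp
  ultimately show ?thesis using assms by linarith
qed

lemma tail_weight_defect_at_threshold:
  assumes "\<theta> \<le> n" "0 < n"
  shows "(- real \<theta> - tail_weight n \<theta> \<theta>) * real (n choose \<theta>) = - 2 * real ((n - 1) choose \<theta>)"
proof -
  have "- real \<theta> - tail_weight n \<theta> \<theta> = - 2 * real (n - \<theta>) / real n"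
    using assms by (simp add: tail_weight_def field_simps of_nat_diff)
  then have "(- real \<theta> - tail_weight n \<theta> \<theta>) * real (n choose \<theta>)
      = - 2 * (real (n - \<theta>) * real (n choose \<theta>)) / real n"
    by simp
  also have "real (n - \<theta>) * real (n choose \<theta>) = real n * real ((n - 1) choose \<theta>)"
    using binomial_absorb_comp[of n \<theta>] by (metis of_nat_mult)
  finally show ?thesis
    using assms by simp
qed

lemma sum_tail_weight_defect_lower_bound:
  assumes "\<theta> \<le> n" "0 < n"
  shows "(\<Sum>j\<in>{0..\<theta>}. (- real j - tail_weight n \<theta> j) * real (n choose j)) \<ge> - 2 * real ((n - 1) choose \<theta>)"
proof -
  have below: "(\<Sum>j\<in>{0..<\<theta>}. (- real j - tail_weight n \<theta> j) * real (n choose j)) \<ge> 0"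
    by (intro sum_nonneg mult_nonneg_nonneg) (auto intro: tail_weight_le_neg)
  have "{0..\<theta>} = insert \<theta> {0..<\<theta>}" by auto
  then show ?thesis
    using below tail_weight_defect_at_threshold[OF assms] by simp
qed

lemma sum_split_at_threshold:
  fixes a b :: "nat \<Rightarrow> real"
  assumes "\<theta> \<le> n"
  shows "(\<Sum>j\<in>{0..\<theta>}. a j) + (\<Sum>j\<in>{\<theta><..n}. b j) = (\<Sum>j\<le>n. b j) + (\<Sum>j\<in>{0..\<theta>}. a j - b j)"
proof -
  have "{..n} = {0..\<theta>} \<union> {\<theta><..n}" using assms by auto
  then have "(\<Sum>j\<le>n. b j) = (\<Sum>j\<in>{0..\<theta>}. b j) + (\<Sum>j\<in>{\<theta><..n}. b j)"
    by (simp add: sum.union_disjoint ivl_disj_int)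
  then show ?thesis by (simp add: sum_subtractf)
qed

theorem lemma6:
  fixes \<theta> :: nat
  assumes "\<theta> \<ge> 2"
  defines "F \<equiv> 4 * \<theta> - 1"
  defines "p \<equiv> (\<lambda>j::nat. real (F choose j) / 2 ^ F)"
  shows "(\<Sum>j\<in>{0..\<theta>}. (- real j) * p j)
         + (\<Sum>j\<in>{\<theta><..F}. (real j + 2 * (1 - real j / real F - real \<theta>)) * p j) > 0"
proof -
  define c where "c = (\<lambda>j. real (F choose j))"
  have F: "0 < F" "\<theta> \<le> F" "real F = 4 * real \<theta> - 1"
    using assms(1) unfolding F_def by auto
  have "2 * ((F - 1) choose \<theta>) < 2 ^ (F - 1)"
    by (rule two_choose_less_power) (use assms(1) in \<open>auto simp: F_def\<close>)
  then have middle: "2 * real ((F - 1) choose \<theta>) < 2 ^ (F - 1)"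
    by (metis of_nat_less_iff of_nat_mult of_nat_numeral of_nat_power)
  have "(\<Sum>j\<in>{0..\<theta>}. (- real j) * c j) + (\<Sum>j\<in>{\<theta><..F}. tail_weight F \<theta> j * c j)
      = (\<Sum>j\<le>F. tail_weight F \<theta> j * c j) + (\<Sum>j\<in>{0..\<theta>}. (- real j - tail_weight F \<theta> j) * c j)"
    using sum_split_at_threshold[OF F(2)] by (simp add: algebra_simps)
  also have "\<dots> \<ge> 2 ^ (F - 1) - 2 * real ((F - 1) choose \<theta>)"
    using sum_tail_weight_choose[OF F(1), of \<theta>] sum_tail_weight_defect_lower_bound[OF F(2,1)] F(3)
    unfolding c_def by simp
  finally have "(\<Sum>j\<in>{0..\<theta>}. (- real j) * c j) + (\<Sum>j\<in>{\<theta><..F}. tail_weight F \<theta> j * c j) > 0"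
    using middle by linarith
  moreover have "(\<Sum>j\<in>{0..\<theta>}. (- real j) * p j)
         + (\<Sum>j\<in>{\<theta><..F}. (real j + 2 * (1 - real j / real F - real \<theta>)) * p j)
      = ((\<Sum>j\<in>{0..\<theta>}. (- real j) * c j) + (\<Sum>j\<in>{\<theta><..F}. tail_weight F \<theta> j * c j)) / 2 ^ F"
    unfolding p_def c_def tail_weight_def by (simp add: sum_divide_distrib add_divide_distrib)
  ultimately show ?thesis by simp
qed

end
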